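(* Let $u,v$ be variables and $a<b$ integers. Then $$\sum_{a<i<b}\frac{(qv)^{1/2-i}}{(q^au)_{i-a}\,(q^iuv)_{b-i}}=\frac{1}{1-qv}\left(\frac{(qv)^{3/2-b}}{(q^au)_{b-a-1}}-\frac{(qv)^{1/2-a}}{(q^{a+1}uv)_{b-a-1}}\right).$$ Moreover, $$\sum_{1\le i<b}\frac{(qv)^{1/2-i}}{(q)_{i-1}\,(q^iv)_{b-i}}=\frac{1}{1-qv}\,\frac{(qv)^{3/2-b}}{(q)_{b-2}}.$$
   Context: $(x)_n:=\prod_{j=0}^{n-1}(1-xq^j)$ for $n\ge0$. Identities of rational functions (with a fixed choice of $(qv)^{1/2}$ and integer powers thereof). *)

theory Defs
  imports Complex_Main
begin

definition qpoch :: "'a::field \<Rightarrow> 'a \<Rightarrow> nat \<Rightarrow> 'a" where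
  "qpoch x q n = (\<Prod>j<n. 1 - x * q ^ j)"

end

theory Submission
  imports Defs
begin

(* Put t = q v and w = q^a u. Shifting i = a + k turns s^(1-2i) into s^(1-2a) t^(-k), and
   then the k-th summand is (D (k+1) - D k) / (1 - t) with
   D k = t^(1-k) / ((w)_(k-1) (w v q^k)_(b-a-k)): after splitting off the factor 1 - x of
   (w)_k and the factor 1 - t x of (w v q^k)_(b-a-k), where x = w q^(k-1), this is the identity
   (1 - t x) - t (1 - x) = 1 - t. Hence the sum telescopes.
   The second identity is the case a = u = 1 of the first plus the term i = 1, which cancels
   the second boundary term because (q v)_(c-1) = (1 - q v) (q^2 v)_(c-2). *)

lemma qpoch_0 [simp]: "qpoch x q 0 = 1"
  by (simp add: qpoch_def)

lemma qpoch_Suc: "qpoch x q (Suc n) = qpoch x q n * (1 - x * q ^ n)"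
  by (simp add: qpoch_def)

lemma qpoch_Suc_left: "qpoch x q (Suc n) = (1 - x) * qpoch (x * q) q n"
  unfolding qpoch_def by (subst prod.lessThan_Suc_shift) (simp add: mult.assoc)

lemma qpoch_add: "qpoch x q (m + n) = qpoch x q m * qpoch (x * q ^ m) q n"
  by (induction n) (simp_all add: qpoch_Suc power_add mult_ac)

lemma power_int_diff_double:
  fixes s :: "'a::field"
  assumes "s \<noteq> 0"
  shows "s powi (c - 2 * int k) = s powi c * inverse (s ^ 2) ^ k"
proof -
  have "s powi (c - 2 * int k) = s powi c / s ^ (2 * k)"
    using assms power_int_of_nat[of s "2 * k"] by (simp add: power_int_diff)
  then show ?thesis by (simp add: power_mult power_inverse divide_inverse)
qed

lemma partial_fraction_step:
  fixes A B x t y :: "'a::field"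
  assumes "A \<noteq> 0" "B \<noteq> 0" "1 - x \<noteq> 0" "1 - t * x \<noteq> 0" "t \<noteq> 0" "1 - t \<noteq> 0"
  shows "y / t / (A * (1 - x) * ((1 - t * x) * B))
       = (y / t / (A * (1 - x) * B) - y / (A * ((1 - t * x) * B))) / (1 - t)"
proof -
  have "y / t / (A * (1 - x) * B) - y / (A * ((1 - t * x) * B))
      = y * ((1 - t * x) - t * (1 - x)) / (t * (A * (1 - x) * ((1 - t * x) * B)))"
    using assms by (simp add: divide_simps) (simp add: algebra_simps)
  also have "(1 - t * x) - t * (1 - x) = 1 - t"
    by (simp add: algebra_simps)
  finally show ?thesis
    using assms by (simp add: divide_divide_eq_left mult.commute)
qed

lemma qpoch_sum_telescope:
  fixes w q v :: "'a::field"
  defines "t \<equiv> q * v"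
  assumes t_nz: "t \<noteq> 0" "1 - t \<noteq> 0"
    and nz: "qpoch w q (n - 1) \<noteq> 0" "qpoch (w * v * q) q (n - 1) \<noteq> 0"
  shows "(\<Sum>k\<in>{1..<n}. inverse t ^ k / (qpoch w q k * qpoch (w * v * q ^ k) q (n - k)))
       = (inverse t ^ (n - 1) / qpoch w q (n - 1) - 1 / qpoch (w * v * q) q (n - 1)) / (1 - t)"
proof (cases n)
  case 0
  then show ?thesis by simp
next
  case Suc
  define D where "D k = inverse t ^ (k - 1) / (qpoch w q (k - 1) * qpoch (w * v * q ^ k) q (n - k))"
    for k
  have step: "inverse t ^ k / (qpoch w q k * qpoch (w * v * q ^ k) q (n - k))
      = (D (Suc k) - D k) / (1 - t)" if k: "k \<in> {1..<n}" for k
  proof -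
    obtain m r where m: "k = Suc m" and r: "n = Suc (k + r)"
      using k by (cases k) (auto dest: less_imp_Suc_add)
    define A where "A = qpoch w q m"
    define B where "B = qpoch (w * v * q ^ Suc k) q r"
    define x where "x = w * q ^ m"
    have left: "qpoch w q k = A * (1 - x)"
      by (simp add: m A_def x_def qpoch_Suc)
    have right: "qpoch (w * v * q ^ k) q (n - k) = (1 - t * x) * B"
      by (simp add: r m B_def x_def t_def qpoch_Suc_left mult_ac)
    have "qpoch w q (n - 1) = A * (1 - x) * qpoch (w * q ^ k) q r"
      by (simp add: r qpoch_add left)
    moreover have "qpoch (w * v * q) q (n - 1) = qpoch (w * v * q) q m * qpoch (w * v * q ^ k) q (n - k)"
      using qpoch_add[of "w * v * q" q m "n - k"] by (simp add: r m mult_ac)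
    ultimately have nz_factors: "A \<noteq> 0" "B \<noteq> 0" "1 - x \<noteq> 0" "1 - t * x \<noteq> 0"
      using nz right by auto
    have "D (Suc k) = inverse t ^ m / t / (A * (1 - x) * B)"
      by (simp add: D_def r m B_def divide_inverse mult_ac flip: left)
    moreover have "D k = inverse t ^ m / (A * ((1 - t * x) * B))"
      unfolding D_def right[symmetric] by (simp add: m A_def)
    moreover have "inverse t ^ k = inverse t ^ m / t"
      by (simp add: m divide_inverse mult.commute)
    ultimately show ?thesis
      unfolding left right using partial_fraction_step[OF nz_factors t_nz] by simp
  qed
  have "(\<Sum>k\<in>{1..<n}. inverse t ^ k / (qpoch w q k * qpoch (w * v * q ^ k) q (n - k)))
      = (\<Sum>k\<in>{1..<n}. D (Suc k) - D k) / (1 - t)"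
    by (simp add: step sum_divide_distrib)
  also have "\<dots> = (D n - D 1) / (1 - t)"
    using Suc by (simp add: sum_Suc_diff')
  finally show ?thesis
    by (simp add: D_def)
qed

lemma qpoch_sum_int:
  fixes q u v s :: "'a::field" and a b :: int
  assumes q0: "q \<noteq> 0" and s0: "s \<noteq> 0" and s_sq: "s ^ 2 = q * v" and qv: "1 - q * v \<noteq> 0"
    and ab: "a < b"
    and nz: "qpoch (q powi a * u) q (nat (b - a - 1)) \<noteq> 0"
      "qpoch (q powi (a + 1) * u * v) q (nat (b - a - 1)) \<noteq> 0"
  shows "(\<Sum>i\<in>{a<..<b}. s powi (1 - 2 * i) /
             (qpoch (q powi a * u) q (nat (i - a)) * qpoch (q powi i * u * v) q (nat (b - i))))
         = 1 / (1 - q * v) *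
           (s powi (3 - 2 * b) / qpoch (q powi a * u) q (nat (b - a - 1))
            - s powi (1 - 2 * a) / qpoch (q powi (a + 1) * u * v) q (nat (b - a - 1)))"
proof -
  define n where "n = nat (b - a)"
  define w where "w = q powi a * u"
  have b: "b = a + int n"
    using ab by (simp add: n_def)
  have len: "nat (b - a - 1) = n - 1"
    by (simp add: n_def)
  have rest: "nat (b - (a + int k)) = n - k" if "k \<le> n" for k
    using that by (simp add: b)
  have shift: "q powi (a + int k) * u * v = w * v * q ^ k" for k
    using q0 by (simp add: w_def power_int_add mult_ac)
  have shift1: "q powi (a + 1) * u * v = w * v * q"
    using shift[of 1] by simp
  have qv0: "q * v \<noteq> 0"
    using s0 s_sq by (metis power_not_zero)
  have pow: "s powi (1 - 2 * (a + int k)) = s powi (1 - 2 * a) * inverse (q * v) ^ k" for k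
    using power_int_diff_double[OF s0, of "1 - 2 * a" k] s_sq by (simp add: algebra_simps)
  have "(\<Sum>i\<in>{a<..<b}. s powi (1 - 2 * i) /
             (qpoch (q powi a * u) q (nat (i - a)) * qpoch (q powi i * u * v) q (nat (b - i))))
      = (\<Sum>k\<in>{1..<n}. s powi (1 - 2 * (a + int k)) /
             (qpoch w q k * qpoch (q powi (a + int k) * u * v) q (nat (b - (a + int k)))))"
    by (rule sum.reindex_bij_witness[of _ "\<lambda>k. a + int k" "\<lambda>i. nat (i - a)"])
      (auto simp: b w_def)
  also have "\<dots> = s powi (1 - 2 * a) *
      (\<Sum>k\<in>{1..<n}. inverse (q * v) ^ k / (qpoch w q k * qpoch (w * v * q ^ k) q (n - k)))"
    unfolding sum_distrib_left pow by (intro sum.cong refl) (simp add: rest shift)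
  also have "\<dots> = s powi (1 - 2 * a) * ((inverse (q * v) ^ (n - 1) / qpoch w q (n - 1)
      - 1 / qpoch (w * v * q) q (n - 1)) / (1 - q * v))"
    using qpoch_sum_telescope[OF qv0 qv nz[unfolded len shift1, folded w_def]] by simp
  moreover have "s powi (3 - 2 * b) = s powi (1 - 2 * a) * inverse (q * v) ^ (n - 1)"
    using pow[of "n - 1"] ab by (simp add: b of_nat_diff algebra_simps)
  ultimately show ?thesis
    unfolding len shift1 w_def[symmetric]
    by (simp add: diff_divide_distrib algebra_simps)
qed

lemma qpoch_sum_int_from_one:
  fixes q v s :: "'a::field" and c :: int
  assumes q0: "q \<noteq> 0" and s0: "s \<noteq> 0" and s_sq: "s ^ 2 = q * v" and qv: "1 - q * v \<noteq> 0"
    and c: "2 \<le> c"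
    and nz: "qpoch q q (nat (c - 2)) \<noteq> 0" "qpoch (q * v) q (nat (c - 1)) \<noteq> 0"
  shows "(\<Sum>i\<in>{1..<c}. s powi (1 - 2 * i) /
             (qpoch q q (nat (i - 1)) * qpoch (q powi i * v) q (nat (c - i))))
         = 1 / (1 - q * v) * (s powi (3 - 2 * c) / qpoch q q (nat (c - 2)))"
proof -
  define R where "R = qpoch (q ^ 2 * v) q (nat (c - 2))"
  have "nat (c - 1) = Suc (nat (c - 2))"
    using c by simp
  then have first_factor: "qpoch (q * v) q (nat (c - 1)) = (1 - q * v) * R"
    by (simp add: R_def qpoch_Suc_left power2_eq_square mult_ac)
  with nz have "R \<noteq> 0"
    by simp
  then have tail: "(\<Sum>i\<in>{1<..<c}. s powi (1 - 2 * i) /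
             (qpoch q q (nat (i - 1)) * qpoch (q powi i * v) q (nat (c - i))))
      = 1 / (1 - q * v) * (s powi (3 - 2 * c) / qpoch q q (nat (c - 2)) - s powi (-1) / R)"
    using qpoch_sum_int[of q s v 1 c 1] q0 s0 s_sq qv c nz by (simp add: R_def)
  have "{1..<c} = insert 1 {1<..<c}"
    using c by auto
  then have "(\<Sum>i\<in>{1..<c}. s powi (1 - 2 * i) /
             (qpoch q q (nat (i - 1)) * qpoch (q powi i * v) q (nat (c - i))))
      = s powi (-1) / ((1 - q * v) * R) + 1 / (1 - q * v) *
           (s powi (3 - 2 * c) / qpoch q q (nat (c - 2)) - s powi (-1) / R)"
    by (simp add: tail first_factor)
  then show ?thesis
    by (simp add: right_diff_distrib)
qed

theorem lemma8p4:
  fixes q u v s :: "'a::field" and a b :: int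
  assumes hq: "q \<noteq> 0" and hs: "s \<noteq> 0" and hsq: "s ^ 2 = q * v"
    and hqv: "1 - q * v \<noteq> 0"
  shows "(a < b \<and>
         (\<forall>i\<in>{a<..<b}. qpoch (q powi a * u) q (nat (i - a)) \<noteq> 0
                          \<and> qpoch (q powi i * u * v) q (nat (b - i)) \<noteq> 0) \<and>
         qpoch (q powi a * u) q (nat (b - a - 1)) \<noteq> 0 \<and>
         qpoch (q powi (a + 1) * u * v) q (nat (b - a - 1)) \<noteq> 0
         \<longrightarrow>
         (\<Sum>i\<in>{a<..<b}. s powi (1 - 2 * i) /
             (qpoch (q powi a * u) q (nat (i - a)) * qpoch (q powi i * u * v) q (nat (b - i))))
         = 1 / (1 - q * v) *
           (s powi (3 - 2 * b) / qpoch (q powi a * u) q (nat (b - a - 1))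
            - s powi (1 - 2 * a) / qpoch (q powi (a + 1) * u * v) q (nat (b - a - 1)))) \<and>
         (\<forall>c::int. 2 \<le> c \<and>
         (\<forall>i\<in>{1..<c}. qpoch q q (nat (i - 1)) \<noteq> 0
                         \<and> qpoch (q powi i * v) q (nat (c - i)) \<noteq> 0) \<and>
         qpoch q q (nat (c - 2)) \<noteq> 0
         \<longrightarrow>
         (\<Sum>i\<in>{1..<c}. s powi (1 - 2 * i) /
             (qpoch q q (nat (i - 1)) * qpoch (q powi i * v) q (nat (c - i))))
         = 1 / (1 - q * v) * (s powi (3 - 2 * c) / qpoch q q (nat (c - 2))))"
proof (intro conjI impI allI; elim conjE)
  fix c :: int
  assume c: "2 \<le> c" and terms: "\<forall>i\<in>{1..<c}. qpoch q q (nat (i - 1)) \<noteq> 0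
      \<and> qpoch (q powi i * v) q (nat (c - i)) \<noteq> 0" and nz: "qpoch q q (nat (c - 2)) \<noteq> 0"
  have "qpoch (q * v) q (nat (c - 1)) \<noteq> 0"
    using terms[rule_format, of 1] c by simp
  then show "(\<Sum>i\<in>{1..<c}. s powi (1 - 2 * i) /
             (qpoch q q (nat (i - 1)) * qpoch (q powi i * v) q (nat (c - i))))
         = 1 / (1 - q * v) * (s powi (3 - 2 * c) / qpoch q q (nat (c - 2)))"
    using qpoch_sum_int_from_one[OF hq hs hsq hqv c nz] by blast
qed (rule qpoch_sum_int[OF hq hs hsq hqv])

end
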